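(* Let $A$ be a commutative ring with identity and $G$ a subgroup of the group $A^\times$ of units of $A$. Then the hypergroup $(A/G,\oplus)$ is realizable.
   Context: $G$ induces the equivalence relation $a\sim b\iff a=gb$ for some $g\in G$ on $A$; $A/G=\{[a]:a\in A\}$ is the set of classes, with hyperaddition $[a]\oplus[b]=\{[c]: c=g_1a+g_2b \text{ for some } g_1,g_2\in G\}$. A hypergroup is a nonempty set with a hyperoperation into nonempty subsets that is associative, has a unique identity $e$, unique inverses $h^{-1}$ with $e\in(h^{-1}*h)\cap(h*h^{-1})$, and is reversible ($c\in a*b\Rightarrow a\in c*b^{-1},\ b\in a^{-1}*c$). For a nonempty set $X$: $1_X$ is the diagonal, $p^*=\{(a,b):(b,a)\in p\}$, $xp=\{y:(x,y)\in p\}$. An association scheme on $X$ is a partition $S$ of $X\times X$ with $1_X\in S$, closed under $p\mapsto p^*$, such that for all $p,q,r\in S$ there is a cardinal $a_{pq}^r$ with $|yp\cap zq^*|=a_{pq}^r$ for all $y\in X$, $z\in yr$. $\mathbf{H}(S)$ is the hypergroup on $S$ with $p*q=\{r: a_{pq}^r\ge1\}$, identity $1_X$, inverse $p^*$. A hypergroup is realizable if it is isomorphic to $\mathbf{H}(S)$ for some association scheme $S$. *)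

theory Defs
  imports Main "HOL-Library.Equipollence"
begin

definition out :: "('x \<times> 'x) set \<Rightarrow> 'x \<Rightarrow> 'x set" where
  "out p x = {y. (x, y) \<in> p}"

text \<open>Association scheme on X (intersection numbers are arbitrary cardinals,
  expressed as: the sets  yp \<inter> zq*  all have the same cardinality for (y,z) in r).\<close>
definition assoc_scheme :: "'x set \<Rightarrow> ('x \<times> 'x) set set \<Rightarrow> bool" where
  "assoc_scheme X S \<longleftrightarrow>
     X \<noteq> {} \<and>
     (\<forall>p\<in>S. p \<noteq> {}) \<and>
     (\<forall>p\<in>S. \<forall>q\<in>S. p \<noteq> q \<longrightarrow> p \<inter> q = {}) \<and>
     \<Union>S = X \<times> X \<and>
     Id_on X \<in> S \<and>
     (\<forall>p\<in>S. p\<inverse> \<in> S) \<and>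
     (\<forall>p\<in>S. \<forall>q\<in>S. \<forall>r\<in>S. \<exists>c :: 'x set.
        \<forall>y z. (y, z) \<in> r \<longrightarrow> (out p y \<inter> out (q\<inverse>) z) \<approx> c)"

text \<open>Hyperoperation of H(S):  p * q = {r in S. a_pq^r \<ge> 1}.\<close>
definition scheme_prod :: "('x \<times> 'x) set set \<Rightarrow> ('x \<times> 'x) set \<Rightarrow> ('x \<times> 'x) set \<Rightarrow> ('x \<times> 'x) set set" where
  "scheme_prod S p q = {r \<in> S. \<forall>(y, z)\<in>r. out p y \<inter> out (q\<inverse>) z \<noteq> {}}"

definition realizable_on :: "'x itself \<Rightarrow> 'h set \<Rightarrow> ('h \<Rightarrow> 'h \<Rightarrow> 'h set) \<Rightarrow> bool" where
  "realizable_on _ H op \<longleftrightarrow>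
     (\<exists>(X :: 'x set) S \<phi>. assoc_scheme X S \<and> bij_betw \<phi> H S \<and>
        (\<forall>a\<in>H. \<forall>b\<in>H. \<phi> ` op a b = scheme_prod S (\<phi> a) (\<phi> b)))"

definition unit_subgroup :: "'a::comm_ring_1 set \<Rightarrow> bool" where
  "unit_subgroup G \<longleftrightarrow> 1 \<in> G \<and> (\<forall>g\<in>G. \<forall>h\<in>G. g * h \<in> G) \<and>
     (\<forall>g\<in>G. \<exists>h\<in>G. g * h = 1)"

definition orb :: "'a::comm_ring_1 set \<Rightarrow> 'a \<Rightarrow> 'a set" where
  "orb G a = (\<lambda>g. g * a) ` G"

definition quot :: "'a::comm_ring_1 set \<Rightarrow> 'a set set" where
  "quot G = range (orb G)"

definition hyperadd :: "'a::comm_ring_1 set \<Rightarrow> 'a set \<Rightarrow> 'a set \<Rightarrow> 'a set set" where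
  "hyperadd G x y = {orb G c | c. \<exists>a b g1 g2. x = orb G a \<and> y = orb G b \<and>
       g1 \<in> G \<and> g2 \<in> G \<and> c = g1 * a + g2 * b}"

end

theory Submission
  imports Defs
begin

text \<open>The classes of A/G become the relations  R_[a] = {(u, v). v - u \<in> [a]}  on A; they partition
  A \<times> A, R_[0] is the diagonal and R_[-a] the converse of R_[a]. For (y, z) \<in> R_[c], say z - y = g c
  with g \<in> G, the affine bijection  w \<mapsto> y + g w  carries {w \<in> [a]. c - w \<in> [b]} onto
  y R_[a] \<inter> z (R_[b])\<inverse>, so the intersection numbers are well defined. Moreover that set is nonempty
  exactly when c = g1 a + g2 b for some g1, g2 \<in> G, i.e. when [c] \<in> [a] \<oplus> [b]; hence [a] \<mapsto> R_[a]
  is an isomorphism of A/G onto the hypergroup of this association scheme.\<close>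

lemma unit_subgroup_mult_closed: "unit_subgroup G \<Longrightarrow> g \<in> G \<Longrightarrow> h \<in> G \<Longrightarrow> g * h \<in> G"
  by (simp add: unit_subgroup_def)

lemma unit_subgroup_inverse: "unit_subgroup G \<Longrightarrow> g \<in> G \<Longrightarrow> \<exists>h\<in>G. g * h = 1"
  by (simp add: unit_subgroup_def)

lemma mult_mem_orb:
  assumes "unit_subgroup G" "g \<in> G" "x \<in> orb G a"
  shows "g * x \<in> orb G a"
proof -
  obtain h where "h \<in> G" "x = h * a" using assms(3) by (auto simp: orb_def)
  then have "g * h \<in> G" "g * x = (g * h) * a"
    using unit_subgroup_mult_closed[OF assms(1,2)] by (simp_all add: mult.assoc)
  then show ?thesis by (simp add: orb_def)
qed

lemma mem_orb_self: "unit_subgroup G \<Longrightarrow> a \<in> orb G a"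
  unfolding orb_def unit_subgroup_def by force

lemma orb_subset: "unit_subgroup G \<Longrightarrow> b \<in> orb G a \<Longrightarrow> orb G b \<subseteq> orb G a"
  unfolding orb_def[of G b] by (auto intro: mult_mem_orb)

lemma orb_eq:
  assumes G: "unit_subgroup G" and b: "b \<in> orb G a"
  shows "orb G b = orb G a"
proof
  show "orb G b \<subseteq> orb G a" by (rule orb_subset[OF G b])
  obtain g where g: "g \<in> G" "b = g * a" using b unfolding orb_def by blast
  obtain h where h: "h \<in> G" "g * h = 1" using unit_subgroup_inverse[OF G g(1)] by blast
  have "h * b = (g * h) * a" using g(2) by (simp add: ac_simps)
  then have "a = h * b" using h(2) by simp
  then have "a \<in> orb G b" using h(1) by (simp add: orb_def)
  then show "orb G a \<subseteq> orb G b" by (rule orb_subset[OF G])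
qed

lemma orb_uminus: "x \<in> orb G (- a) \<longleftrightarrow> - x \<in> orb G a"
  by (auto simp: orb_def image_iff) (metis minus_minus)+

lemma orb_zero: "unit_subgroup G \<Longrightarrow> orb G 0 = {0}"
  by (auto simp: orb_def unit_subgroup_def)

definition diff_rel :: "'a::comm_ring_1 set \<Rightarrow> ('a \<times> 'a) set" where
  "diff_rel C = {(u, v). v - u \<in> C}"

lemma inj_diff_rel: "inj diff_rel"
proof
  fix C D :: "'a set"
  assume "diff_rel C = diff_rel D"
  then have "(0, v) \<in> diff_rel C \<longleftrightarrow> (0, v) \<in> diff_rel D" for v by simp
  then show "C = D" by (auto simp: diff_rel_def)
qed

lemma out_diff_rel_Int:
  "out (diff_rel C) y \<inter> out ((diff_rel D)\<inverse>) z = {w. w - y \<in> C \<and> z - w \<in> D}"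
  by (auto simp: out_def diff_rel_def)

definition orb_split :: "'a::comm_ring_1 set \<Rightarrow> 'a \<Rightarrow> 'a \<Rightarrow> 'a \<Rightarrow> 'a set" where
  "orb_split G a b c = {w \<in> orb G a. c - w \<in> orb G b}"

lemma out_diff_rel_Int_eqpoll_orb_split:
  assumes G: "unit_subgroup G" and yz: "(y, z) \<in> diff_rel (orb G c)"
  shows "out (diff_rel (orb G a)) y \<inter> out ((diff_rel (orb G b))\<inverse>) z \<approx> orb_split G a b c"
proof -
  obtain g where g: "g \<in> G" "z - y = g * c" using yz by (auto simp: diff_rel_def orb_def)
  obtain h where h: "h \<in> G" "g * h = 1" using unit_subgroup_inverse[OF G g(1)] by blast
  have hg: "h * g = 1" using h(2) by (simp add: mult.commute)
  have c: "c = h * (z - y)" using g(2) hg by (simp add: mult.assoc[symmetric])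
  let ?T = "{w. w - y \<in> orb G a \<and> z - w \<in> orb G b}"
  have "bij_betw (\<lambda>w. y + g * w) (orb_split G a b c) ?T"
  proof (rule bij_betw_byWitness[where f' = "\<lambda>w. h * (w - y)"])
    show "\<forall>w\<in>orb_split G a b c. h * (y + g * w - y) = w"
      using hg by (simp add: mult.assoc[symmetric])
    show "\<forall>w\<in>?T. y + g * (h * (w - y)) = w"
      using h(2) by (simp add: mult.assoc[symmetric])
    have "z - (y + g * w) = g * (c - w)" for w
      using g(2) by (simp add: algebra_simps)
    then show "(\<lambda>w. y + g * w) ` orb_split G a b c \<subseteq> ?T"
      using g(1) by (auto simp: orb_split_def intro: mult_mem_orb[OF G])
    have "c - h * (w - y) = h * (z - w)" for w
      using c by (simp add: algebra_simps)
    then show "(\<lambda>w. h * (w - y)) ` ?T \<subseteq> orb_split G a b c"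
      using h(1) by (auto simp: orb_split_def intro: mult_mem_orb[OF G])
  qed
  then show ?thesis
    unfolding out_diff_rel_Int by (meson eqpoll_def eqpoll_sym)
qed

lemma assoc_scheme_diff_rel:
  assumes G: "unit_subgroup G"
  shows "assoc_scheme UNIV (diff_rel ` quot G)"
  unfolding assoc_scheme_def
proof (intro conjI ballI impI)
  show "\<Union> (diff_rel ` quot G) = UNIV \<times> UNIV"
    using mem_orb_self[OF G] by (fastforce simp: quot_def diff_rel_def)
  have "Id_on UNIV = diff_rel (orb G 0)"
    using orb_zero[OF G] by (auto simp: diff_rel_def)
  then show "Id_on UNIV \<in> diff_rel ` quot G" by (simp add: quot_def)
next
  fix p assume "p \<in> diff_rel ` quot G"
  then obtain a where p: "p = diff_rel (orb G a)" by (auto simp: quot_def)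
  have "(0, a) \<in> p"
    using p mem_orb_self[OF G] by (simp add: diff_rel_def)
  then show "p \<noteq> {}" by blast
  have "p\<inverse> = diff_rel (orb G (- a))"
    using p by (auto simp: diff_rel_def orb_uminus)
  then show "p\<inverse> \<in> diff_rel ` quot G" by (simp add: quot_def)
next
  fix p q assume "p \<in> diff_rel ` quot G" "q \<in> diff_rel ` quot G" "p \<noteq> q"
  then obtain a b where p: "p = diff_rel (orb G a)" and q: "q = diff_rel (orb G b)"
    by (auto simp: quot_def)
  with \<open>p \<noteq> q\<close> have "orb G a \<noteq> orb G b" by auto
  then have "d \<notin> orb G a \<or> d \<notin> orb G b" for d
    using orb_eq[OF G] by metis
  with p q show "p \<inter> q = {}" by (auto simp: diff_rel_def)
next
  fix p q r assume "p \<in> diff_rel ` quot G" "q \<in> diff_rel ` quot G" "r \<in> diff_rel ` quot G"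
  then obtain a b c where "p = diff_rel (orb G a)" "q = diff_rel (orb G b)"
    "r = diff_rel (orb G c)" by (auto simp: quot_def)
  then show "\<exists>C :: 'a set. \<forall>y z. (y, z) \<in> r \<longrightarrow> out p y \<inter> out (q\<inverse>) z \<approx> C"
    using out_diff_rel_Int_eqpoll_orb_split[OF G] by blast
qed simp_all

lemma orb_mem_hyperadd_iff:
  assumes G: "unit_subgroup G"
  shows "orb G c \<in> hyperadd G (orb G a) (orb G b) \<longleftrightarrow> orb_split G a b c \<noteq> {}"
proof
  assume "orb G c \<in> hyperadd G (orb G a) (orb G b)"
  then obtain a' b' g1 g2 where ab: "orb G a = orb G a'" "orb G b = orb G b'"
    and g12: "g1 \<in> G" "g2 \<in> G" and c: "orb G c = orb G (g1 * a' + g2 * b')"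
    by (auto simp: hyperadd_def)
  obtain g where g: "g \<in> G" "c = g * (g1 * a' + g2 * b')"
    using mem_orb_self[OF G, of c] c by (auto simp: orb_def)
  have "(g * g1) * a' \<in> orb G a" "(g * g2) * b' \<in> orb G b"
    using ab g(1) g12 by (auto simp: orb_def unit_subgroup_mult_closed[OF G])
  moreover have "c - (g * g1) * a' = (g * g2) * b'"
    using g(2) by (simp add: algebra_simps)
  ultimately have "(g * g1) * a' \<in> orb_split G a b c"
    by (simp add: orb_split_def)
  then show "orb_split G a b c \<noteq> {}" by blast
next
  assume "orb_split G a b c \<noteq> {}"
  then obtain g1 g2 where g12: "g1 \<in> G" "g2 \<in> G" and "c - g1 * a = g2 * b"
    by (auto simp: orb_split_def orb_def)
  then have "c = g1 * a + g2 * b" by (simp add: diff_eq_eq add.commute)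
  with g12 show "orb G c \<in> hyperadd G (orb G a) (orb G b)"
    unfolding hyperadd_def by blast
qed

lemma hyperadd_orb_eq:
  assumes G: "unit_subgroup G"
  shows "hyperadd G (orb G a) (orb G b) = {orb G c | c. orb_split G a b c \<noteq> {}}"
proof -
  have "X \<in> range (orb G)" if "X \<in> hyperadd G (orb G a) (orb G b)" for X
    using that by (auto simp: hyperadd_def)
  then show ?thesis
    using orb_mem_hyperadd_iff[OF G] by blast
qed

lemma scheme_prod_diff_rel_eq:
  assumes G: "unit_subgroup G"
  shows "scheme_prod (diff_rel ` quot G) (diff_rel (orb G a)) (diff_rel (orb G b))
    = {diff_rel (orb G c) | c. orb_split G a b c \<noteq> {}}"
proof -
  have "out (diff_rel (orb G a)) y \<inter> out ((diff_rel (orb G b))\<inverse>) z \<noteq> {}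
      \<longleftrightarrow> orb_split G a b c \<noteq> {}" if "(y, z) \<in> diff_rel (orb G c)" for y z c
    using out_diff_rel_Int_eqpoll_orb_split[OF G that] eqpoll_empty_iff_empty eqpoll_sym
    by metis
  moreover have "(0, c) \<in> diff_rel (orb G c)" for c
    using mem_orb_self[OF G] by (simp add: diff_rel_def)
  ultimately show ?thesis
    unfolding scheme_prod_def quot_def by fast
qed

theorem proposition5p14:
  fixes G :: "'a::comm_ring_1 set"
  assumes "unit_subgroup G"
  shows "realizable_on TYPE('a) (quot G) (hyperadd G)"
proof -
  let ?S = "diff_rel ` quot G"
  have bij: "bij_betw diff_rel (quot G) ?S"
    using inj_on_subset[OF inj_diff_rel subset_UNIV] by (simp add: bij_betw_def)
  have "diff_rel ` hyperadd G x y = scheme_prod ?S (diff_rel x) (diff_rel y)"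
    if xy: "x \<in> quot G" "y \<in> quot G" for x y
  proof -
    obtain a b where "x = orb G a" "y = orb G b"
      using xy by (auto simp: quot_def)
    then show ?thesis
      by (simp add: hyperadd_orb_eq[OF assms] scheme_prod_diff_rel_eq[OF assms]) blast
  qed
  then show ?thesis
    unfolding realizable_on_def using assoc_scheme_diff_rel[OF assms] bij by blast
qed

end
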